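(* Let $G$ be a group and let $S \subset F$ be a set of weak identities in $G$. Then the $T$-subgroup $\langle S\rangle_T$ generated by $S$ is also a set of weak identities in $G$.
   Context: Let $F$ be the free group on countably many generators $g_1,g_2,\dots$. For $N\ge 1$, $F^{\times N}$ denotes the direct product of $N$ copies of $F$ and $i_k: F\to F^{\times N}$ the inclusion as the $k$-th factor. A subset $S\subset F$ is a set of weak identities in a group $G$ if there exists an integer $N\ge1$ such that for any elements $s_1,\dots,s_N\in S$ and any homomorphism $\rho: F^{\times N}\to G$ there is an index $k\in\{1,\dots,N\}$ with $\rho(i_k(s_k))=1$. A $T$-subgroup (verbal subgroup) of $F$ is a subgroup preserved by all endomorphisms of $F$; for $S\subset F$, $\langle S\rangle_T$ denotes the smallest $T$-subgroup of $F$ containing $S$. *)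

theory Defs
  imports "HOL-Algebra.Algebra"
begin

text \<open>Free group F on countably many generators g_1, g_2, ... (indexed by nat).
  Elements are freely reduced words; a letter (n, True) is g_n, (n, False) is g_n^-1.\<close>

type_synonym fword = "(nat \<times> bool) list"

fun freduce :: "fword \<Rightarrow> fword" where
  "freduce [] = []"
| "freduce (x # xs) =
     (case freduce xs of
        [] \<Rightarrow> [x]
      | y # ys \<Rightarrow> (if fst x = fst y \<and> snd x \<noteq> snd y then ys else x # y # ys))"

definition freduced :: "fword \<Rightarrow> bool" where
  "freduced w \<longleftrightarrow> (\<forall>i. Suc i < length w \<longrightarrow>
      \<not> (fst (w ! i) = fst (w ! Suc i) \<and> snd (w ! i) \<noteq> snd (w ! Suc i)))"

definition freeF :: "fword monoid" where
  "freeF = \<lparr>carrier = {w. freduced w}, monoid.mult = (\<lambda>x y. freduce (x @ y)), one = []\<rparr>"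

definition freeF_pow :: "nat \<Rightarrow> (nat \<Rightarrow> fword) monoid" where
  "freeF_pow N = product_group {1..N} (\<lambda>_. freeF)"

definition freeF_incl :: "nat \<Rightarrow> nat \<Rightarrow> fword \<Rightarrow> (nat \<Rightarrow> fword)" where
  "freeF_incl N k x = (\<lambda>j\<in>{1..N}. if j = k then x else [])"

definition weak_identities :: "fword set \<Rightarrow> ('g, 'b) monoid_scheme \<Rightarrow> bool" where
  "weak_identities S G \<longleftrightarrow> S \<subseteq> carrier freeF \<and>
     (\<exists>N::nat. N \<ge> 1 \<and>
       (\<forall>s::nat \<Rightarrow> fword. (\<forall>k\<in>{1..N}. s k \<in> S) \<longrightarrow>
         (\<forall>\<rho> \<in> hom (freeF_pow N) G.
            \<exists>k\<in>{1..N}. \<rho> (freeF_incl N k (s k)) = \<one>\<^bsub>G\<^esub>)))"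

definition T_subgroup :: "fword set \<Rightarrow> bool" where
  "T_subgroup H \<longleftrightarrow> subgroup H freeF \<and> (\<forall>\<phi> \<in> hom freeF freeF. \<phi> ` H \<subseteq> H)"

definition T_generated :: "fword set \<Rightarrow> fword set" where
  "T_generated S = \<Inter> {H. T_subgroup H \<and> S \<subseteq> H}"

end

theory Submission
  imports Defs
begin

(* Fix N witnessing that S is a set of weak identities and a homomorphism rho from F^N to G.
   For each k, the words all of whose endomorphic images are killed by rho o i_k form a
   T-subgroup of F. Hence if s_k in <S>_T survives rho o i_k, so does some endomorphic image
   phi_k(t_k) of an element t_k of S. Precomposing rho with the coordinatewise endomorphism
   (phi_1, ..., phi_N) of F^N then contradicts the choice of N for S.
   The group laws for reduced words come from reading reduction as a right fold of a
   cancelling cons, which is compatible with reducing any suffix first. *)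

definition fcons :: "nat \<times> bool \<Rightarrow> fword \<Rightarrow> fword" where
  "fcons x ys = (case ys of [] \<Rightarrow> [x]
     | y # ys' \<Rightarrow> (if fst x = fst y \<and> snd x \<noteq> snd y then ys' else x # y # ys'))"

lemma fcons_Nil [simp]: "fcons x [] = [x]"
  by (simp add: fcons_def)

lemma fcons_Cons [simp]:
  "fcons x (y # ys) = (if fst x = fst y \<and> snd x \<noteq> snd y then ys else x # y # ys)"
  by (simp add: fcons_def)

lemma freduce_Cons: "freduce (x # xs) = fcons x (freduce xs)"
  by (simp add: fcons_def)

declare freduce.simps(2) [simp del]
declare freduce_Cons [simp]

lemma freduced_Nil [simp]: "freduced []"
  by (simp add: freduced_def)

lemma freduced_single [simp]: "freduced [x]"
  by (simp add: freduced_def)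

lemma freduced_Cons_Cons [simp]:
  "freduced (x # y # ys) \<longleftrightarrow> \<not> (fst x = fst y \<and> snd x \<noteq> snd y) \<and> freduced (y # ys)"
  unfolding freduced_def by (auto simp: nth_Cons split: nat.splits)

lemma freduced_ConsD: "freduced (x # xs) \<Longrightarrow> freduced xs"
  by (cases xs) auto

lemma freduced_fcons: "freduced ys \<Longrightarrow> freduced (fcons x ys)"
  by (cases ys rule: remdups_adj.cases) (auto dest: freduced_ConsD)

lemma freduced_foldr_fcons: "freduced ys \<Longrightarrow> freduced (foldr fcons xs ys)"
  by (induction xs) (simp_all add: freduced_fcons)

lemma freduced_freduce: "freduced (freduce xs)"
  by (induction xs) (simp_all add: freduced_fcons)

lemma freduce_freduced: "freduced xs \<Longrightarrow> freduce xs = xs"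
proof (induction xs)
  case (Cons x xs)
  then have "freduce xs = xs"
    using freduced_ConsD by blast
  with Cons.prems show ?case
    by (cases xs) auto
qed simp

lemma fcons_fcons_cancel:
  assumes "fst x = fst y" "snd x \<noteq> snd y" "freduced w"
  shows "fcons x (fcons y w) = w"
  using assms by (cases w rule: remdups_adj.cases) (auto simp: prod_eq_iff)

lemma freduce_append: "freduce (xs @ ys) = foldr fcons xs (freduce ys)"
  by (induction xs) simp_all

lemma foldr_fcons_freduce:
  "freduced z \<Longrightarrow> foldr fcons (freduce xs) z = foldr fcons xs z"
proof (induction xs)
  case (Cons x xs)
  show ?case
  proof (cases "freduce xs")
    case (Cons y r)
    then have "foldr fcons xs z = fcons y (foldr fcons r z)"
      using Cons.IH Cons.prems by simp
    with Cons show ?thesis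
      using Cons.prems by (auto simp: fcons_fcons_cancel freduced_foldr_fcons)
  qed (use Cons in simp)
qed simp

lemma freduce_append_freduce_left: "freduce (freduce xs @ ys) = freduce (xs @ ys)"
  by (simp add: freduce_append foldr_fcons_freduce freduced_freduce)

lemma freduce_append_freduce_right: "freduce (xs @ freduce ys) = freduce (xs @ ys)"
  by (simp add: freduce_append freduce_freduced freduced_freduce)

definition finv :: "fword \<Rightarrow> fword" where
  "finv w = map (\<lambda>(n, b). (n, \<not> b)) (rev w)"

lemma foldr_fcons_finv_cancel: "freduced z \<Longrightarrow> foldr fcons (finv w @ w) z = z"
proof (induction w arbitrary: z)
  case (Cons a w)
  have "foldr fcons (finv (a # w) @ a # w) z
      = foldr fcons (finv w) (fcons (fst a, \<not> snd a) (fcons a (foldr fcons w z)))"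
    by (simp add: finv_def split_beta)
  also have "\<dots> = foldr fcons (finv w @ w) z"
    using Cons.prems by (simp add: fcons_fcons_cancel freduced_foldr_fcons)
  finally show ?case
    using Cons by simp
qed (simp add: finv_def)

lemma freduce_finv_append: "freduce (finv w @ w) = []"
  using foldr_fcons_finv_cancel[of "[]" w] freduce_append[of "finv w @ w" "[]"] by simp

lemma carrier_freeF: "carrier freeF = {w. freduced w}"
  and one_freeF [simp]: "\<one>\<^bsub>freeF\<^esub> = []"
  and mult_freeF: "x \<otimes>\<^bsub>freeF\<^esub> y = freduce (x @ y)"
  by (simp_all add: freeF_def)

lemma group_freeF: "group freeF"
proof (rule groupI)
  fix x y z
  show "x \<otimes>\<^bsub>freeF\<^esub> y \<otimes>\<^bsub>freeF\<^esub> z = x \<otimes>\<^bsub>freeF\<^esub> (y \<otimes>\<^bsub>freeF\<^esub> z)"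
    by (simp add: mult_freeF freduce_append_freduce_left freduce_append_freduce_right)
next
  fix x assume "x \<in> carrier freeF"
  then show "\<exists>y\<in>carrier freeF. y \<otimes>\<^bsub>freeF\<^esub> x = \<one>\<^bsub>freeF\<^esub>"
    by (intro bexI[of _ "freduce (finv x)"])
       (simp_all add: carrier_freeF mult_freeF freduce_append_freduce_left
         freduce_finv_append freduced_freduce)
qed (simp_all add: carrier_freeF mult_freeF freduced_freduce freduce_freduced)

lemma hom_product_group_map:
  assumes "\<And>i. i \<in> I \<Longrightarrow> f i \<in> hom (G i) (H i)"
  shows "(\<lambda>x. \<lambda>i\<in>I. f i (x i)) \<in> hom (product_group I G) (product_group I H)"
  using assms
  by (intro homI) (auto simp: hom_mult PiE_iff intro: hom_in_carrier[OF assms] intro!: restrict_ext)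

lemma hom_product_group_inclusion:
  assumes "\<And>i. i \<in> I \<Longrightarrow> monoid (G i)" and "k \<in> I"
  shows "(\<lambda>x. \<lambda>i\<in>I. if i = k then x else \<one>\<^bsub>G i\<^esub>) \<in> hom (G k) (product_group I G)"
  using assms by (intro homI) (auto simp: PiE_iff monoid.one_closed intro!: restrict_ext)

lemma freeF_incl_hom:
  assumes "k \<in> {1..N}"
  shows "freeF_incl N k \<in> hom freeF (freeF_pow N)"
proof -
  have "freeF_incl N k = (\<lambda>x. \<lambda>i\<in>{1..N}. if i = k then x else \<one>\<^bsub>freeF\<^esub>)"
    by (simp add: fun_eq_iff freeF_incl_def)
  then show ?thesis
    using hom_product_group_inclusion[of "{1..N}" "\<lambda>_. freeF" k] assms group_freeF
    by (simp add: freeF_pow_def group.is_monoid)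
qed

lemma freeF_incl_map:
  assumes "\<And>j. j \<in> {1..N} \<Longrightarrow> \<phi> j \<in> hom freeF freeF" and "k \<in> {1..N}"
  shows "(\<lambda>j\<in>{1..N}. \<phi> j (freeF_incl N k x j)) = freeF_incl N k (\<phi> k x)"
  using assms hom_one[of _ freeF freeF] group_freeF by (auto simp: freeF_incl_def)

lemma id_hom_freeF: "(\<lambda>x. x) \<in> hom freeF freeF"
  by (rule homI) auto

lemma T_subgroup_carrier: "T_subgroup (carrier freeF)"
  by (simp add: T_subgroup_def group.subgroup_self group_freeF hom_carrier)

lemma T_generated_least: "T_subgroup H \<Longrightarrow> S \<subseteq> H \<Longrightarrow> T_generated S \<subseteq> H"
  by (auto simp: T_generated_def)

lemma T_generated_subset_carrier: "S \<subseteq> carrier freeF \<Longrightarrow> T_generated S \<subseteq> carrier freeF"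
  by (simp add: T_generated_least T_subgroup_carrier)

definition endo_images :: "fword set \<Rightarrow> fword set" where
  "endo_images S = (\<Union>\<phi>\<in>hom freeF freeF. \<phi> ` S)"

(* The largest T-subgroup contained in the kernel of h. *)
definition endo_kernel :: "(fword \<Rightarrow> 'g) \<Rightarrow> ('g, 'b) monoid_scheme \<Rightarrow> fword set" where
  "endo_kernel h G = (\<Inter>\<phi>\<in>hom freeF freeF. kernel freeF G (h \<circ> \<phi>))"

lemma T_subgroup_endo_kernel:
  assumes "group G" and "h \<in> hom freeF G"
  shows "T_subgroup (endo_kernel h G)"
  unfolding T_subgroup_def
proof
  show "subgroup (endo_kernel h G) freeF"
    unfolding endo_kernel_def
  proof (rule subgroup_Inter)
    fix K assume "K \<in> (\<lambda>\<phi>. kernel freeF G (h \<circ> \<phi>)) ` hom freeF freeF"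
    then obtain \<phi> where "\<phi> \<in> hom freeF freeF" "K = kernel freeF G (h \<circ> \<phi>)"
      by blast
    then show "subgroup K freeF"
      using assms hom_compose group_freeF
      by (metis group_hom.subgroup_kernel group_hom.intro group_hom_axioms.intro)
  qed (use id_hom_freeF in blast)
  show "\<forall>\<psi>\<in>hom freeF freeF. \<psi> ` endo_kernel h G \<subseteq> endo_kernel h G"
    using hom_compose[of _ freeF freeF _ freeF]
    by (fastforce simp: endo_kernel_def kernel_def hom_in_carrier)
qed

lemma T_generated_subset_kernel:
  assumes "group G" and "h \<in> hom freeF G" and "S \<subseteq> carrier freeF"
    and "endo_images S \<subseteq> kernel freeF G h"
  shows "T_generated S \<subseteq> kernel freeF G h"
proof -
  have "S \<subseteq> endo_kernel h G"
    using assms(3,4) by (fastforce simp: endo_images_def endo_kernel_def kernel_def)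
  then have "T_generated S \<subseteq> endo_kernel h G"
    using T_generated_least T_subgroup_endo_kernel assms(1,2) by blast
  also have "\<dots> \<subseteq> kernel freeF G h"
    using id_hom_freeF by (auto simp: endo_kernel_def kernel_def)
  finally show ?thesis .
qed

definition weak_identities_of_order :: "nat \<Rightarrow> fword set \<Rightarrow> ('g, 'b) monoid_scheme \<Rightarrow> bool" where
  "weak_identities_of_order N S G \<longleftrightarrow>
     (\<forall>s. (\<forall>k\<in>{1..N}. s k \<in> S) \<longrightarrow>
       (\<forall>\<rho>\<in>hom (freeF_pow N) G. \<exists>k\<in>{1..N}. \<rho> (freeF_incl N k (s k)) = \<one>\<^bsub>G\<^esub>))"

lemma weak_identities_iff:
  "weak_identities S G \<longleftrightarrow> S \<subseteq> carrier freeF \<and> (\<exists>N\<ge>1. weak_identities_of_order N S G)"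
  by (simp add: weak_identities_def weak_identities_of_order_def)

lemma weak_identities_of_order_endo_images:
  assumes "weak_identities_of_order N S G"
  shows "weak_identities_of_order N (endo_images S) G"
  unfolding weak_identities_of_order_def
proof (intro allI impI ballI)
  fix u \<rho>
  assume "\<forall>k\<in>{1..N}. u k \<in> endo_images S" and \<rho>: "\<rho> \<in> hom (freeF_pow N) G"
  then have "\<forall>k\<in>{1..N}. \<exists>\<phi>. \<phi> \<in> hom freeF freeF \<and> (\<exists>t. t \<in> S \<and> u k = \<phi> t)"
    unfolding endo_images_def by blast
  then obtain \<phi> where "\<forall>k\<in>{1..N}. \<phi> k \<in> hom freeF freeF \<and> (\<exists>t. t \<in> S \<and> u k = \<phi> k t)"
    by (rule bchoice[THEN exE])
  then obtain t where \<phi>: "\<And>k. k \<in> {1..N} \<Longrightarrow> \<phi> k \<in> hom freeF freeF"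
    and t: "\<And>k. k \<in> {1..N} \<Longrightarrow> t k \<in> S \<and> u k = \<phi> k (t k)"
    using bchoice[of "{1..N}" "\<lambda>k t. t \<in> S \<and> u k = \<phi> k t"] by blast
  define \<Phi> where "\<Phi> = (\<lambda>x. \<lambda>j\<in>{1..N}. \<phi> j (x j))"
  have "\<Phi> \<in> hom (freeF_pow N) (freeF_pow N)"
    unfolding \<Phi>_def freeF_pow_def using \<phi> by (rule hom_product_group_map)
  then have "\<rho> \<circ> \<Phi> \<in> hom (freeF_pow N) G"
    using \<rho> by (rule hom_compose)
  then obtain k where k: "k \<in> {1..N}" and "(\<rho> \<circ> \<Phi>) (freeF_incl N k (t k)) = \<one>\<^bsub>G\<^esub>"
    using assms t unfolding weak_identities_of_order_def by blast
  moreover have "\<Phi> (freeF_incl N k (t k)) = freeF_incl N k (u k)"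
    using freeF_incl_map[OF \<phi> k] t[OF k] unfolding \<Phi>_def by simp
  ultimately show "\<exists>k\<in>{1..N}. \<rho> (freeF_incl N k (u k)) = \<one>\<^bsub>G\<^esub>"
    by auto
qed

lemma weak_identities_of_order_T_generated:
  assumes "group G" and "S \<subseteq> carrier freeF"
    and "weak_identities_of_order N (endo_images S) G"
  shows "weak_identities_of_order N (T_generated S) G"
  unfolding weak_identities_of_order_def
proof (intro allI impI ballI)
  fix s \<rho>
  assume s: "\<forall>k\<in>{1..N}. s k \<in> T_generated S" and \<rho>: "\<rho> \<in> hom (freeF_pow N) G"
  show "\<exists>k\<in>{1..N}. \<rho> (freeF_incl N k (s k)) = \<one>\<^bsub>G\<^esub>"
  proof (rule ccontr)
    assume survives: "\<not> ?thesis"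
    have "\<exists>u \<in> endo_images S. \<rho> (freeF_incl N k u) \<noteq> \<one>\<^bsub>G\<^esub>"
      if k: "k \<in> {1..N}" for k
    proof -
      have h: "\<rho> \<circ> freeF_incl N k \<in> hom freeF G"
        using freeF_incl_hom[OF k] \<rho> by (rule hom_compose)
      have "s k \<notin> kernel freeF G (\<rho> \<circ> freeF_incl N k)"
        using survives k by (simp add: kernel_def)
      then have "\<not> endo_images S \<subseteq> kernel freeF G (\<rho> \<circ> freeF_incl N k)"
        using T_generated_subset_kernel[OF assms(1) h assms(2)] s k by blast
      then show ?thesis
        using assms(2) by (fastforce simp: endo_images_def kernel_def hom_in_carrier)
    qed
    then obtain u where "\<And>k. k \<in> {1..N} \<Longrightarrow>
        u k \<in> endo_images S \<and> \<rho> (freeF_incl N k (u k)) \<noteq> \<one>\<^bsub>G\<^esub>"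
      by metis
    then show False
      using assms(3) \<rho> unfolding weak_identities_of_order_def by blast
  qed
qed

theorem theorem2p5:
  fixes G :: "('g, 'b) monoid_scheme" and S :: "fword set"
  assumes "group G"
    and "weak_identities S G"
  shows "weak_identities (T_generated S) G"
proof -
  from assms(2) obtain N where S: "S \<subseteq> carrier freeF" and "N \<ge> 1"
    and "weak_identities_of_order N S G"
    unfolding weak_identities_iff by blast
  then have "weak_identities_of_order N (T_generated S) G"
    using assms(1) weak_identities_of_order_endo_images weak_identities_of_order_T_generated
    by blast
  with S \<open>N \<ge> 1\<close> show ?thesis
    unfolding weak_identities_iff using T_generated_subset_carrier by blast
qed

end
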